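(* Let $f$ be a local rule for conductances, i.e. a function assigning to each pair of positive integer degrees a positive value, symmetric in its arguments, which for every graph $G$ defines the conductance $c_f(u,v)=f(d(u),d(v))$ on each edge $(u,v)$. Then either $f$ is roughly equivalent to the minimum degree rule $c(u,v)=\frac{1}{\min[d(u),d(v)]}$, or the cyclic cover time under $c_f$ is not bounded by $O(n^2)$: for every constant $K>0$ there exists a connected graph $G$ on some number $n$ of vertices with $CYC[G,c_f]>Kn^2$.
   Context: $d(v)$ denotes the degree of $v$. Two local rules $c_1,c_2$ are roughly equivalent if there exist constants $0<\alpha\le\beta$ such that for every graph and every edge $e$, $\alpha c_1(e)\le c_2(e)\le \beta c_1(e)$. The random walk associated with a conductance function $c$ on a connected graph $G$ moves from the current vertex $v$ to a neighbor $u$ with probability $\frac{c(v,u)}{\sum_{w\in N(v)}c(v,w)}$. The hitting time $H[u,v]$ is the expected number of steps for the walk started at $u$ to reach $v$, and the cyclic cover time is $CYC[G,c]=\min_{\sigma}\left(\sum_{i=1}^{n-1}H[v_{\sigma(i)},v_{\sigma(i+1)}]+H[v_{\sigma(n)},v_{\sigma(1)}]\right)$, minimum over orderings $\sigma$ of the $n$ vertices. *)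

theory Defs
  imports Complex_Main
begin

definition simple_graph :: "nat set \<Rightarrow> (nat \<Rightarrow> nat \<Rightarrow> bool) \<Rightarrow> bool" where
  "simple_graph V E \<longleftrightarrow> finite V \<and>
     (\<forall>u v. E u v \<longrightarrow> u \<in> V \<and> v \<in> V \<and> u \<noteq> v \<and> E v u)"

definition graph_connected :: "nat set \<Rightarrow> (nat \<Rightarrow> nat \<Rightarrow> bool) \<Rightarrow> bool" where
  "graph_connected V E \<longleftrightarrow> V \<noteq> {} \<and> (\<forall>u\<in>V. \<forall>v\<in>V. E\<^sup>*\<^sup>* u v)"

definition nbrs :: "nat set \<Rightarrow> (nat \<Rightarrow> nat \<Rightarrow> bool) \<Rightarrow> nat \<Rightarrow> nat set" where
  "nbrs V E v = {u \<in> V. E v u}"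

definition deg :: "nat set \<Rightarrow> (nat \<Rightarrow> nat \<Rightarrow> bool) \<Rightarrow> nat \<Rightarrow> nat" where
  "deg V E v = card (nbrs V E v)"

type_synonym cond_rule = "nat set \<Rightarrow> (nat \<Rightarrow> nat \<Rightarrow> bool) \<Rightarrow> nat \<Rightarrow> nat \<Rightarrow> real"

definition local_cond :: "(nat \<Rightarrow> nat \<Rightarrow> real) \<Rightarrow> cond_rule" where
  "local_cond f V E u v = f (deg V E u) (deg V E v)"

definition min_deg_rule :: cond_rule where
  "min_deg_rule V E u v = 1 / real (min (deg V E u) (deg V E v))"

definition roughly_equivalent :: "cond_rule \<Rightarrow> cond_rule \<Rightarrow> bool" where
  "roughly_equivalent c1 c2 \<longleftrightarrow> (\<exists>\<alpha> \<beta>. 0 < \<alpha> \<and> \<alpha> \<le> \<beta> \<and>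
     (\<forall>V E u v. simple_graph V E \<and> E u v \<longrightarrow>
        \<alpha> * c1 V E u v \<le> c2 V E u v \<and> c2 V E u v \<le> \<beta> * c1 V E u v))"

definition trans_prob :: "nat set \<Rightarrow> (nat \<Rightarrow> nat \<Rightarrow> bool) \<Rightarrow> (nat \<Rightarrow> nat \<Rightarrow> real)
    \<Rightarrow> nat \<Rightarrow> nat \<Rightarrow> real" where
  "trans_prob V E c v u = c v u / (\<Sum>w\<in>nbrs V E v. c v w)"

text \<open>nohit V E c v t u = probability that the walk started at u has not visited v
 at any of the times 0..t, i.e. P_u(T_v > t).\<close>
fun nohit :: "nat set \<Rightarrow> (nat \<Rightarrow> nat \<Rightarrow> bool) \<Rightarrow> (nat \<Rightarrow> nat \<Rightarrow> real)
    \<Rightarrow> nat \<Rightarrow> nat \<Rightarrow> nat \<Rightarrow> real" where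
  "nohit V E c v 0 u = (if u = v then 0 else 1)"
| "nohit V E c v (Suc t) u = (if u = v then 0 else
     (\<Sum>w\<in>nbrs V E u. trans_prob V E c u w * nohit V E c v t w))"

text \<open>Hitting time H[u,v] = E_u[T_v] = sum_{t>=0} P_u(T_v > t).\<close>
definition hitting_time :: "nat set \<Rightarrow> (nat \<Rightarrow> nat \<Rightarrow> bool) \<Rightarrow> (nat \<Rightarrow> nat \<Rightarrow> real)
    \<Rightarrow> nat \<Rightarrow> nat \<Rightarrow> real" where
  "hitting_time V E c u v = (\<Sum>t. nohit V E c v t u)"

definition cyc_sum :: "nat set \<Rightarrow> (nat \<Rightarrow> nat \<Rightarrow> bool) \<Rightarrow> (nat \<Rightarrow> nat \<Rightarrow> real)
    \<Rightarrow> nat list \<Rightarrow> real" where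
  "cyc_sum V E c xs = (\<Sum>i<length xs. hitting_time V E c (xs ! i) (xs ! ((i + 1) mod length xs)))"

definition cyclic_cover_time :: "nat set \<Rightarrow> (nat \<Rightarrow> nat \<Rightarrow> bool) \<Rightarrow> (nat \<Rightarrow> nat \<Rightarrow> real) \<Rightarrow> real" where
  "cyclic_cover_time V E c = Min {cyc_sum V E c xs | xs. distinct xs \<and> set xs = V}"

end

theory Submission
  imports Defs "HOL-Library.Countable"
begin

text \<open>
  Hitting times are bounded below by potentials: if \<psi> vanishes at v and satisfies
  \<psi> x \<le> 1 + \<Sum>y. P x y * \<psi> y wherever it is positive, then \<psi> x \<le> H[x,v]. Both test graphs
  consist of a hub carrying a pendant path of length L plus a small gadget, and explicit
  potentials evaluate their cyclic cover times. In the biclique gadget (the hub joined to b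
  vertices of degree a, which are completely joined to a - 1 vertices of degree b) the potential
  decreases linearly along the path at a rate proportional to b * (f a (b+1) + (a-1) * f a b) /
  f 2 2, so a cover time O(n^2) bounds f p q * min p q from above. In the star gadget (the hub
  joined to the centres of b - 1 stars with a - 1 leaves each) every visit of a star costs about
  L * f 2 2 / f b a, which bounds f p q * min p q from below. Choosing L of the size of the
  gadget gives the two bounds of rough equivalence with the minimum degree rule.
\<close>

section \<open>Random walks with conductances\<close>

lemma nbrs_subset: "nbrs V E x \<subseteq> V"
  by (auto simp: nbrs_def)

lemma finite_nbrs: "simple_graph V E \<Longrightarrow> finite (nbrs V E x)"
  by (meson finite_subset nbrs_subset simple_graph_def)

lemma nohit_target [simp]: "nohit V E c v t v = 0"
  by (cases t) auto

locale conductance_walk =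
  fixes V :: "nat set" and E :: "nat \<Rightarrow> nat \<Rightarrow> bool" and c :: "nat \<Rightarrow> nat \<Rightarrow> real"
  assumes simple: "simple_graph V E"
    and connected: "graph_connected V E"
    and nbrs_nonempty: "x \<in> V \<Longrightarrow> nbrs V E x \<noteq> {}"
    and conductance_pos: "E x y \<Longrightarrow> 0 < c x y"
begin

abbreviation "N \<equiv> nbrs V E"
abbreviation "P \<equiv> trans_prob V E c"

lemma finite_V: "finite V"
  using simple simple_graph_def by blast

lemma edge_in_V: "E x y \<Longrightarrow> x \<in> V \<and> y \<in> V"
  using simple simple_graph_def by blast

lemma total_conductance_pos: "x \<in> V \<Longrightarrow> 0 < (\<Sum>w\<in>N x. c x w)"
  using finite_nbrs[OF simple] nbrs_nonempty conductance_pos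
  by (intro sum_pos) (auto simp: nbrs_def)

lemma trans_prob_pos: "x \<in> V \<Longrightarrow> w \<in> N x \<Longrightarrow> 0 < P x w"
  using total_conductance_pos conductance_pos by (simp add: trans_prob_def nbrs_def)

lemma sum_trans_prob: "x \<in> V \<Longrightarrow> (\<Sum>w\<in>N x. P x w) = 1"
  using total_conductance_pos[of x] by (simp add: trans_prob_def sum_divide_distrib[symmetric])

lemma nohit_bounds: "x \<in> V \<Longrightarrow> 0 \<le> nohit V E c v t x \<and> nohit V E c v t x \<le> 1"
proof (induction t arbitrary: x)
  case (Suc t)
  have IH: "0 \<le> nohit V E c v t w \<and> nohit V E c v t w \<le> 1" if "w \<in> N x" for w
    using Suc.IH that nbrs_subset by blast
  have "(\<Sum>w\<in>N x. P x w * nohit V E c v t w) \<le> (\<Sum>w\<in>N x. P x w)"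
    using IH trans_prob_pos[OF Suc.prems] by (intro sum_mono) (simp add: mult_left_le)
  moreover have "0 \<le> (\<Sum>w\<in>N x. P x w * nohit V E c v t w)"
    using IH trans_prob_pos[OF Suc.prems] by (intro sum_nonneg) (simp add: less_imp_le)
  ultimately show ?case using sum_trans_prob[OF Suc.prems] by simp
qed simp

lemma nohit_Suc_le: "x \<in> V \<Longrightarrow> nohit V E c v (Suc t) x \<le> nohit V E c v t x"
proof (induction t arbitrary: x)
  case 0
  then show ?case using nohit_bounds[OF 0, of v "Suc 0"] by auto
next
  case (Suc t)
  have "P x w * nohit V E c v (Suc t) w \<le> P x w * nohit V E c v t w" if "w \<in> N x" for w
    using Suc.IH[of w] that nbrs_subset trans_prob_pos[OF Suc.prems that]
    by (intro mult_left_mono) (auto simp del: nohit.simps)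
  then show ?case by (simp add: sum_mono)
qed

lemma nohit_antimono: "x \<in> V \<Longrightarrow> t \<le> t' \<Longrightarrow> nohit V E c v t' x \<le> nohit V E c v t x"
  using lift_Suc_antimono_le[of "\<lambda>t. nohit V E c v t x"] nohit_Suc_le by blast

text \<open>Markov property: not hitting v for s + t steps requires not hitting it in the first s steps
  and then, from wherever the walk is, in the next t steps.\<close>
lemma nohit_add_le:
  assumes "\<forall>w\<in>V. nohit V E c v t w \<le> C" "0 \<le> C" "x \<in> V"
  shows "nohit V E c v (s + t) x \<le> nohit V E c v s x * C"
  using assms(3)
proof (induction s arbitrary: x)
  case 0
  then show ?case using assms(1) by (cases "x = v") auto
next
  case (Suc s)
  have "P x w * nohit V E c v (s + t) w \<le> P x w * (nohit V E c v s w * C)" if "w \<in> N x" for w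
    using Suc.IH[of w] that nbrs_subset trans_prob_pos[OF Suc.prems that]
    by (intro mult_left_mono) (auto simp del: nohit.simps)
  then have "(\<Sum>w\<in>N x. P x w * nohit V E c v (s + t) w) \<le> (\<Sum>w\<in>N x. P x w * nohit V E c v s w) * C"
    by (simp add: sum_mono sum_distrib_right mult.assoc)
  then show ?case by simp
qed

lemma nohit_along_path:
  assumes q: "0 < q" "q \<le> 1" "\<And>y w. E y w \<Longrightarrow> q \<le> P y w"
  shows "(E ^^ k) x v \<Longrightarrow> x \<in> V \<Longrightarrow> nohit V E c v k x \<le> 1 - q ^ k"
proof (induction k arbitrary: x)
  case (Suc k)
  show ?case
  proof (cases "x = v")
    case True
    then show ?thesis using q power_le_one[of q "Suc k"] by simp
  next
    case False
    obtain y where y: "E x y" "(E ^^ k) y v" using relpowp_Suc_D2[OF Suc.prems(1)] by blast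
    have yN: "y \<in> N x" using y edge_in_V by (simp add: nbrs_def)
    have IH: "nohit V E c v k y \<le> 1 - q ^ k" using Suc.IH y edge_in_V by blast
    have escape: "0 \<le> P x w * (1 - nohit V E c v k w)" if "w \<in> N x" for w
      using that nohit_bounds nbrs_subset trans_prob_pos[OF Suc.prems(2) that] by fastforce
    have "P x y * (1 - nohit V E c v k y) \<le> (\<Sum>w\<in>N x. P x w * (1 - nohit V E c v k w))"
      using escape finite_nbrs[OF simple] by (intro member_le_sum[OF yN]) auto
    also have "\<dots> = 1 - (\<Sum>w\<in>N x. P x w * nohit V E c v k w)"
      using sum_trans_prob[OF Suc.prems(2)] by (simp add: algebra_simps sum_subtractf)
    finally have "nohit V E c v (Suc k) x \<le> 1 - P x y * (1 - nohit V E c v k y)"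
      using False by simp
    moreover have "q * q ^ k \<le> P x y * (1 - nohit V E c v k y)"
      using q IH y trans_prob_pos[OF Suc.prems(2) yN] by (intro mult_mono) auto
    ultimately show ?thesis by simp
  qed
qed simp

lemma min_trans_prob: "\<exists>q>0. q \<le> 1 \<and> (\<forall>y w. E y w \<longrightarrow> q \<le> P y w)"
proof -
  define S where "S = insert 1 ((\<lambda>(y, w). P y w) ` {(y, w) \<in> V \<times> V. E y w})"
  have "{(y, w) \<in> V \<times> V. E y w} \<subseteq> V \<times> V" by blast
  then have "finite {(y, w) \<in> V \<times> V. E y w}"
    by (rule finite_subset) (simp add: finite_V)
  then have fin: "finite S" by (simp add: S_def)
  have "\<forall>s\<in>S. 0 < s"
    using trans_prob_pos edge_in_V by (auto simp: S_def nbrs_def)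
  then have "0 < Min S"
    using fin by (simp add: S_def)
  moreover have "Min S \<le> 1"
    using fin by (simp add: S_def)
  moreover have "Min S \<le> P y w" if "E y w" for y w
  proof (rule Min_le[OF fin])
    show "P y w \<in> S" using that edge_in_V by (force simp: S_def)
  qed
  ultimately show ?thesis by blast
qed

text \<open>From every vertex, v is reached within n steps with probability at least q^n > 0.\<close>
lemma nohit_geometric_decay:
  assumes "v \<in> V"
  obtains n \<rho> where "0 < n" "0 \<le> \<rho>" "\<rho> < 1" "\<And>k u. u \<in> V \<Longrightarrow> nohit V E c v (k * n) u \<le> \<rho> ^ k"
proof -
  obtain q where q: "0 < q" "q \<le> 1" "\<And>y w. E y w \<Longrightarrow> q \<le> P y w"
    using min_trans_prob by blast
  have "\<forall>u\<in>V. \<exists>k. (E ^^ k) u v"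
    using connected assms rtranclp_imp_relpowp unfolding graph_connected_def by metis
  then obtain dist where dist: "\<And>u. u \<in> V \<Longrightarrow> (E ^^ dist u) u v" by metis
  define n where "n = Suc (Max (dist ` V))"
  have n: "0 < n" "\<And>u. u \<in> V \<Longrightarrow> dist u \<le> n"
    using finite_V by (auto simp: n_def le_SucI)
  define \<rho> where "\<rho> = 1 - q ^ n"
  have \<rho>: "0 \<le> \<rho>" "\<rho> < 1" using q by (auto simp: \<rho>_def power_le_one)
  have round: "nohit V E c v n u \<le> \<rho>" if "u \<in> V" for u
  proof -
    have "nohit V E c v n u \<le> nohit V E c v (dist u) u"
      using nohit_antimono n that by blast
    also have "\<dots> \<le> 1 - q ^ dist u" using nohit_along_path[OF q] dist that by blast
    also have "\<dots> \<le> \<rho>" using power_decreasing[of "dist u" n q] n that q by (simp add: \<rho>_def)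
    finally show ?thesis .
  qed
  have "nohit V E c v (k * n) u \<le> \<rho> ^ k" if "u \<in> V" for k u
    using that
  proof (induction k arbitrary: u)
    case (Suc k)
    have "nohit V E c v (k * n + n) u \<le> nohit V E c v (k * n) u * \<rho>"
      using nohit_add_le round \<rho> Suc.prems by blast
    also have "\<dots> \<le> \<rho> ^ k * \<rho>" using Suc \<rho> by (simp add: mult_right_mono)
    finally show ?case by (simp add: add.commute mult.commute)
  qed (use nohit_bounds in simp)
  then show ?thesis using that n(1) \<rho> by blast
qed

lemma summable_nohit:
  assumes "v \<in> V" "x \<in> V"
  shows "summable (\<lambda>t. nohit V E c v t x)"
proof -
  obtain n \<rho> where n: "0 < n" and \<rho>: "0 \<le> \<rho>" "\<rho> < 1"
    and rounds: "\<And>k u. u \<in> V \<Longrightarrow> nohit V E c v (k * n) u \<le> \<rho> ^ k"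
    using nohit_geometric_decay[OF assms(1)] by blast
  define \<eta> where "\<eta> = root n ((1 + \<rho>) / 2)"
  have \<eta>: "0 < \<eta>" "\<eta> < 1" "\<rho> \<le> \<eta> ^ n"
    using \<rho> n by (auto simp: \<eta>_def real_root_gt_zero real_root_lt_1_iff real_root_pow_pos2)
  have "norm (nohit V E c v t x) \<le> \<eta> ^ t / \<eta> ^ n" for t
  proof -
    have "t \<le> n * (t div n) + n"
      by (metis n add_le_cancel_left div_mult_mod_eq less_imp_le_nat mod_less_divisor mult.commute)
    then have "\<eta> ^ (n * (t div n) + n) \<le> \<eta> ^ t" using \<eta> by (simp add: power_decreasing)
    have "nohit V E c v t x \<le> nohit V E c v ((t div n) * n) x"
      using nohit_antimono assms(2) by (simp add: div_times_less_eq_dividend)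
    also have "\<dots> \<le> \<rho> ^ (t div n)" using rounds assms(2) by blast
    also have "\<dots> \<le> (\<eta> ^ n) ^ (t div n)" using \<rho> \<eta> by (simp add: power_mono)
    also have "\<dots> = \<eta> ^ (n * (t div n) + n) / \<eta> ^ n" using \<eta> by (simp add: power_add power_mult)
    also have "\<dots> \<le> \<eta> ^ t / \<eta> ^ n"
      using \<open>\<eta> ^ (n * (t div n) + n) \<le> \<eta> ^ t\<close> \<eta> by (simp add: divide_right_mono)
    finally show ?thesis using nohit_bounds[OF assms(2)] by simp
  qed
  moreover have "summable (\<lambda>t. \<eta> ^ t / \<eta> ^ n)"
    using \<eta> by (intro summable_divide summable_geometric) simp
  ultimately show ?thesis by (rule summable_comparison_test'[rotated])
qed

lemma hitting_time_nonneg: "v \<in> V \<Longrightarrow> x \<in> V \<Longrightarrow> 0 \<le> hitting_time V E c x v"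
  unfolding hitting_time_def using summable_nohit nohit_bounds by (simp add: suminf_nonneg)

end

section \<open>A comparison principle for hitting times\<close>

text \<open>Dividing by the total conductance at x, the inequality reads \<psi> x \<le> 1 + \<Sum>y. P x y * \<psi> y:
  \<psi> is a subsolution at x of the equation H = 1 + P H satisfied by hitting times.\<close>
definition hitting_subsolution :: "('a \<Rightarrow> 'a set) \<Rightarrow> ('a \<Rightarrow> 'a \<Rightarrow> real) \<Rightarrow> ('a \<Rightarrow> real) \<Rightarrow> 'a \<Rightarrow> bool" where
  "hitting_subsolution N c \<psi> x \<longleftrightarrow> (\<Sum>y\<in>N x. c x y * (\<psi> x - \<psi> y)) \<le> (\<Sum>y\<in>N x. c x y)"

lemma hitting_subsolution_if_locally_constant:
  assumes "\<forall>y\<in>N x. \<psi> y = \<psi> x" and "\<forall>y\<in>N x. 0 \<le> c x y"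
  shows "hitting_subsolution N c \<psi> x"
  using assms by (simp add: hitting_subsolution_def sum_nonneg)

lemma hitting_subsolution_isolated: "N x = {} \<Longrightarrow> hitting_subsolution N c \<psi> x"
  by (simp add: hitting_subsolution_def)

context conductance_walk
begin

lemma subsolution_step:
  assumes "x \<in> V" "hitting_subsolution N c \<psi> x"
  shows "\<psi> x \<le> 1 + (\<Sum>w\<in>N x. P x w * \<psi> w)"
proof -
  define C where "C = (\<Sum>w\<in>N x. c x w)"
  have C: "0 < C" using total_conductance_pos[OF assms(1)] by (simp add: C_def)
  have "(\<Sum>w\<in>N x. c x w * (\<psi> x - \<psi> w)) = \<psi> x * C - (\<Sum>w\<in>N x. c x w * \<psi> w)"
    by (simp add: C_def algebra_simps sum_subtractf sum_distrib_left)
  then have "\<psi> x * C \<le> C + (\<Sum>w\<in>N x. c x w * \<psi> w)"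
    using assms(2) by (simp add: hitting_subsolution_def C_def)
  then have "\<psi> x \<le> 1 + (\<Sum>w\<in>N x. c x w * \<psi> w) / C"
    using C by (simp add: field_simps)
  also have "(\<Sum>w\<in>N x. c x w * \<psi> w) / C = (\<Sum>w\<in>N x. P x w * \<psi> w)"
    by (simp add: trans_prob_def C_def sum_divide_distrib)
  finally show ?thesis .
qed

lemma sum_nohit_Suc:
  assumes "y \<noteq> v"
  shows "(\<Sum>s<Suc t. nohit V E c v s y) = 1 + (\<Sum>w\<in>N y. P y w * (\<Sum>s<t. nohit V E c v s w))"
proof -
  have "(\<Sum>s<Suc t. nohit V E c v s y) = 1 + (\<Sum>s<t. \<Sum>w\<in>N y. P y w * nohit V E c v s w)"
    unfolding sum.lessThan_Suc_shift using assms by simp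
  also have "\<dots> = 1 + (\<Sum>w\<in>N y. P y w * (\<Sum>s<t. nohit V E c v s w))"
    by (simp add: sum_distrib_left sum.swap[of _ "{..<t}"])
  finally show ?thesis .
qed

text \<open>The sum on the left is E_y[min(T_v, t)].\<close>
lemma subsolution_deficit:
  assumes v: "\<psi> v \<le> 0"
    and sub: "\<And>y. y \<in> V \<Longrightarrow> y \<noteq> v \<Longrightarrow> 0 < \<psi> y \<Longrightarrow> hitting_subsolution N c \<psi> y"
    and B: "0 \<le> B" "\<And>y. y \<in> V \<Longrightarrow> \<psi> y \<le> B"
    and "y \<in> V"
  shows "\<psi> y - (\<Sum>s<t. nohit V E c v s y) \<le> B * nohit V E c v t y"
  using \<open>y \<in> V\<close>
proof (induction t arbitrary: y)
  case 0
  then show ?case using B v by (cases "y = v") auto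
next
  case (Suc t)
  show ?case
  proof (cases "y = v \<or> \<psi> y \<le> 0")
    case True
    then have "\<psi> y \<le> 0" using v by auto
    moreover have "0 \<le> B * nohit V E c v (Suc t) y"
      using B nohit_bounds[OF Suc.prems, of v "Suc t"] by (simp del: nohit.simps)
    moreover have "0 \<le> (\<Sum>s<Suc t. nohit V E c v s y)"
      using nohit_bounds[OF Suc.prems] by (simp add: sum_nonneg del: nohit.simps)
    ultimately show ?thesis by linarith
  next
    case False
    then have "\<psi> y \<le> 1 + (\<Sum>w\<in>N y. P y w * \<psi> w)"
      using subsolution_step[OF Suc.prems sub] Suc.prems by auto
    then have "\<psi> y - (\<Sum>s<Suc t. nohit V E c v s y)
        \<le> (\<Sum>w\<in>N y. P y w * (\<psi> w - (\<Sum>s<t. nohit V E c v s w)))"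
      using sum_nohit_Suc False by (simp add: algebra_simps sum_subtractf del: sum.lessThan_Suc)
    also have "\<dots> \<le> (\<Sum>w\<in>N y. P y w * (B * nohit V E c v t w))"
      using Suc.IH nbrs_subset[of V E y] trans_prob_pos[OF Suc.prems]
      by (intro sum_mono mult_left_mono) (auto simp: less_imp_le subset_iff)
    also have "\<dots> = B * nohit V E c v (Suc t) y"
      using False by (simp add: sum_distrib_left algebra_simps)
    finally show ?thesis .
  qed
qed

lemma hitting_time_ge_subsolution:
  assumes v: "v \<in> V" "\<psi> v \<le> 0"
    and sub: "\<And>y. y \<in> V \<Longrightarrow> y \<noteq> v \<Longrightarrow> 0 < \<psi> y \<Longrightarrow> hitting_subsolution N c \<psi> y"
    and x: "x \<in> V"
  shows "\<psi> x \<le> hitting_time V E c x v"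
proof -
  define B where "B = max 0 (Max (\<psi> ` V))"
  have B: "0 \<le> B" "\<And>y. y \<in> V \<Longrightarrow> \<psi> y \<le> B"
    using finite_V by (auto simp: B_def intro: le_max_iff_disj[THEN iffD2] Max_ge)
  have summ: "summable (\<lambda>t. nohit V E c v t x)" using summable_nohit[OF v(1) x] .
  have "\<psi> x - B * nohit V E c v t x \<le> hitting_time V E c x v" for t
  proof -
    have "(\<Sum>s<t. nohit V E c v s x) \<le> hitting_time V E c x v"
      unfolding hitting_time_def
      by (rule sum_le_suminf[OF summ]) (use nohit_bounds[OF x] in auto)
    then show ?thesis using subsolution_deficit[OF v(2) sub B x, of t] by linarith
  qed
  moreover have "(\<lambda>t. \<psi> x - B * nohit V E c v t x) \<longlonglongrightarrow> \<psi> x - B * 0"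
    by (intro tendsto_intros summable_LIMSEQ_zero[OF summ])
  ultimately show ?thesis using LIMSEQ_le_const2 by fastforce
qed

lemma hitting_time_ge_subsolution_diff:
  assumes nonneg: "\<And>y. y \<in> V \<Longrightarrow> 0 \<le> \<psi> y"
    and sub: "\<And>y. y \<in> V \<Longrightarrow> 0 < \<psi> y \<Longrightarrow> hitting_subsolution N c \<psi> y"
    and "y \<in> V" "z \<in> V"
  shows "\<psi> y - \<psi> z \<le> hitting_time V E c y z"
proof (rule hitting_time_ge_subsolution[where \<psi> = "\<lambda>u. \<psi> u - \<psi> z"])
  fix u assume "u \<in> V" "0 < \<psi> u - \<psi> z"
  then show "hitting_subsolution N c (\<lambda>u. \<psi> u - \<psi> z) u"
    using sub nonneg \<open>z \<in> V\<close> by (fastforce simp: hitting_subsolution_def)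
qed (use assms in auto)

end

section \<open>Cyclic sums of hitting times\<close>

lemma cyclic_cover_time_ge:
  assumes "finite V" "V \<noteq> {}"
    and "\<And>xs. distinct xs \<Longrightarrow> set xs = V \<Longrightarrow> R \<le> cyc_sum V E c xs"
  shows "R \<le> cyclic_cover_time V E c"
proof -
  define A where "A = {cyc_sum V E c xs | xs. distinct xs \<and> set xs = V}"
  have "A \<subseteq> cyc_sum V E c ` {xs. set xs \<subseteq> V \<and> distinct xs}"
    unfolding A_def by auto
  then have "finite A"
    using finite_subset_distinct[OF assms(1)] finite_subset by blast
  moreover obtain xs where "set xs = V" "distinct xs"
    using finite_distinct_list[OF assms(1)] by blast
  ultimately have "Min A \<in> A"
    by (intro Min_in) (auto simp: A_def)
  then obtain ys where "distinct ys" "set ys = V" "Min A = cyc_sum V E c ys"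
    unfolding A_def by auto
  then show ?thesis
    using assms(3) by (simp add: cyclic_cover_time_def A_def[symmetric])
qed

lemma cyclic_telescoping_le:
  fixes g h :: "nat \<Rightarrow> real"
  assumes step: "\<And>k. k < n \<Longrightarrow> g k - g ((k + 1) mod n) \<le> h k"
    and nonneg: "\<And>k. k < n \<Longrightarrow> 0 \<le> h k"
    and "i < n" "j < n"
  shows "g i - g j \<le> (\<Sum>k<n. h k)"
proof -
  have arc: "g a - g b \<le> (\<Sum>k\<in>{a..<b}. h k)" if "a \<le> b" "b < n" for a b
  proof -
    have "g a - g b = (\<Sum>k\<in>{a..<b}. g k - g (Suc k))"
      using sum_Suc_diff'[OF that(1), of g] by (simp add: sum_subtractf)
    also have "\<dots> \<le> (\<Sum>k\<in>{a..<b}. h k)"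
      using step that by (intro sum_mono) (metis Suc_eq_plus1 atLeastLessThan_iff
          le_less_trans less_trans_Suc mod_less not_less_eq order_less_imp_le)
    finally show ?thesis .
  qed
  show ?thesis
  proof (cases "i \<le> j")
    case True
    have "(\<Sum>k\<in>{i..<j}. h k) \<le> (\<Sum>k<n. h k)"
      by (rule sum_mono2) (use \<open>j < n\<close> nonneg in auto)
    then show ?thesis using arc[OF True \<open>j < n\<close>] by simp
  next
    case False
    define l where "l = n - 1"
    have l: "n = Suc l" "i \<le> l" using \<open>i < n\<close> by (auto simp: l_def)
    have "g i - g j \<le> (\<Sum>k\<in>{i..<l}. h k) + h l + (\<Sum>k\<in>{0..<j}. h k)"
      using arc[of i l] arc[of 0 j] step[of l] l \<open>j < n\<close> by simp
    also have "\<dots> = (\<Sum>k\<in>{0..<j} \<union> {i..<n}. h k)"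
      using False l by (subst sum.union_disjoint) auto
    also have "\<dots> \<le> (\<Sum>k<n. h k)"
      by (rule sum_mono2) (use nonneg \<open>j < n\<close> in auto)
    finally show ?thesis .
  qed
qed

lemma cyclic_list_enters:
  assumes "set xs \<inter> S \<noteq> {}" "x \<in> set xs" "x \<notin> S"
  shows "\<exists>k<length xs. xs ! k \<notin> S \<and> xs ! ((k + 1) mod length xs) \<in> S"
proof (rule ccontr)
  assume stuck: "\<not> ?thesis"
  define n where "n = length xs"
  obtain k0 where k0: "k0 < n" "xs ! k0 = x"
    using assms(2) by (metis in_set_conv_nth n_def)
  have outside: "xs ! ((k0 + m) mod n) \<notin> S" for m
  proof (induction m)
    case 0
    then show ?case using k0 assms(3) by simp
  next
    case (Suc m)
    have "(k0 + m) mod n < n" using k0 by simp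
    then have "xs ! (((k0 + m) mod n + 1) mod n) \<notin> S" using stuck Suc n_def by blast
    then show ?case by (simp add: mod_Suc_eq)
  qed
  obtain i where i: "i < n" "xs ! i \<in> S"
    using assms(1) by (metis disjoint_iff in_set_conv_nth n_def)
  have "(k0 + (i + n - k0)) mod n = i" using k0 i by simp
  then show False using outside[of "i + n - k0"] i by simp
qed

context conductance_walk
begin

lemma cyc_sum_terms_nonneg:
  assumes "set xs = V" "i < length xs"
  shows "0 \<le> hitting_time V E c (xs ! i) (xs ! ((i + 1) mod length xs))"
proof -
  have "(i + 1) mod length xs < length xs" using assms(2) by (intro mod_less_divisor) linarith
  then show ?thesis using assms by (intro hitting_time_nonneg) auto
qed

text \<open>Each of the disjoint target sets S j is entered at some step of the cycle, at different
  steps for different j, and entering S j from outside costs at least m.\<close>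
lemma cyc_sum_ge_disjoint_targets:
  assumes xs: "distinct xs" "set xs = V" and "finite J"
    and targets: "\<And>j. j \<in> J \<Longrightarrow> S j \<subseteq> V \<and> S j \<noteq> {} \<and> \<not> V \<subseteq> S j"
    and disjoint: "\<And>i j. i \<in> J \<Longrightarrow> j \<in> J \<Longrightarrow> i \<noteq> j \<Longrightarrow> S i \<inter> S j = {}"
    and far: "\<And>j x y. j \<in> J \<Longrightarrow> x \<in> V \<Longrightarrow> x \<notin> S j \<Longrightarrow> y \<in> S j \<Longrightarrow> m \<le> hitting_time V E c x y"
  shows "real (card J) * m \<le> cyc_sum V E c xs"
proof -
  define n where "n = length xs"
  define h where "h i = hitting_time V E c (xs ! i) (xs ! ((i + 1) mod n))" for i
  have "\<forall>j\<in>J. \<exists>k<n. xs ! k \<notin> S j \<and> xs ! ((k + 1) mod n) \<in> S j"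
  proof
    fix j assume "j \<in> J"
    then obtain x where "x \<in> V" "x \<notin> S j" "set xs \<inter> S j \<noteq> {}" using targets xs(2) by blast
    then show "\<exists>k<n. xs ! k \<notin> S j \<and> xs ! ((k + 1) mod n) \<in> S j"
      unfolding n_def using xs(2) by (intro cyclic_list_enters) auto
  qed
  then obtain k where k: "\<And>j. j \<in> J \<Longrightarrow> k j < n \<and> xs ! k j \<notin> S j \<and> xs ! ((k j + 1) mod n) \<in> S j"
    by metis
  have "inj_on k J"
    using k disjoint by (fastforce intro!: inj_onI)
  have "(\<Sum>j\<in>J. m) \<le> (\<Sum>j\<in>J. h (k j))"
    using k far xs(2) by (intro sum_mono) (auto simp: h_def n_def)
  also have "\<dots> = (\<Sum>i\<in>k ` J. h i)"
    by (rule sum.reindex[OF \<open>inj_on k J\<close>, unfolded comp_def, symmetric])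
  also have "\<dots> \<le> (\<Sum>i<n. h i)"
    using k cyc_sum_terms_nonneg[OF xs(2)] by (intro sum_mono2) (auto simp: h_def n_def)
  finally show ?thesis by (simp add: cyc_sum_def h_def n_def)
qed

lemma cyc_sum_ge_subsolution_diff:
  assumes nonneg: "\<And>y. y \<in> V \<Longrightarrow> 0 \<le> \<psi> y"
    and sub: "\<And>y. y \<in> V \<Longrightarrow> 0 < \<psi> y \<Longrightarrow> hitting_subsolution N c \<psi> y"
    and xs: "set xs = V" and "u \<in> V" "v \<in> V"
  shows "\<psi> u - \<psi> v \<le> cyc_sum V E c xs"
proof -
  define n where "n = length xs"
  obtain i where i: "i < n" "xs ! i = u" using \<open>u \<in> V\<close> xs n_def by (metis in_set_conv_nth)
  obtain j where j: "j < n" "xs ! j = v" using \<open>v \<in> V\<close> xs n_def by (metis in_set_conv_nth)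
  have "\<psi> (xs ! i) - \<psi> (xs ! j)
      \<le> (\<Sum>k<n. hitting_time V E c (xs ! k) (xs ! ((k + 1) mod n)))"
  proof (rule cyclic_telescoping_le[OF _ _ i(1) j(1)])
    fix k assume "k < n"
    moreover have "(k + 1) mod n < n" using \<open>k < n\<close> by (intro mod_less_divisor) simp
    ultimately show "\<psi> (xs ! k) - \<psi> (xs ! ((k + 1) mod n)) \<le> hitting_time V E c (xs ! k) (xs ! ((k + 1) mod n))"
      using xs n_def by (intro hitting_time_ge_subsolution_diff[OF nonneg sub]) auto
    show "0 \<le> hitting_time V E c (xs ! k) (xs ! ((k + 1) mod n))"
      using cyc_sum_terms_nonneg[OF xs] \<open>k < n\<close> n_def by simp
  qed
  then show ?thesis using i j by (simp add: cyc_sum_def n_def)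
qed

end

text \<open>Test graphs are built on a datatype and moved to nat along to_nat; the vertex set is the
  set of non-isolated vertices.\<close>

definition nat_vertices :: "('a::countable \<Rightarrow> 'a \<Rightarrow> bool) \<Rightarrow> nat set" where
  "nat_vertices E = to_nat ` {x. \<exists>y. E x y}"

definition nat_edges :: "('a::countable \<Rightarrow> 'a \<Rightarrow> bool) \<Rightarrow> nat \<Rightarrow> nat \<Rightarrow> bool" where
  "nat_edges E u v \<longleftrightarrow> (\<exists>x y. E x y \<and> u = to_nat x \<and> v = to_nat y)"

definition degree :: "('a \<Rightarrow> 'a \<Rightarrow> bool) \<Rightarrow> 'a \<Rightarrow> nat" where
  "degree E x = card {y. E x y}"

lemma nat_edges_to_nat [simp]: "nat_edges E (to_nat x) (to_nat y) \<longleftrightarrow> E x y"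
  by (auto simp: nat_edges_def dest: injD[OF inj_to_nat])

lemma to_nat_in_nat_vertices [simp]: "to_nat x \<in> nat_vertices E \<longleftrightarrow> (\<exists>y. E x y)"
  by (auto simp: nat_vertices_def dest: injD[OF inj_to_nat])

locale finite_graph =
  fixes E :: "'a::countable \<Rightarrow> 'a \<Rightarrow> bool"
  assumes sym: "E x y \<Longrightarrow> E y x"
    and irrefl: "\<not> E x x"
    and finite_support: "finite {x. \<exists>y. E x y}"
begin

abbreviation "V \<equiv> nat_vertices E"
abbreviation "G \<equiv> nat_edges E"

lemma finite_adjacent: "finite {y. E x y}"
  by (rule finite_subset[OF _ finite_support]) (auto intro: sym)

lemma simple_graph: "simple_graph V G"
  unfolding simple_graph_def
proof (intro conjI allI impI)
  show "finite V" using finite_support by (simp add: nat_vertices_def)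
  fix u v assume "G u v"
  then obtain x y where "E x y" "u = to_nat x" "v = to_nat y" by (auto simp: nat_edges_def)
  then show "u \<in> V" "v \<in> V" "u \<noteq> v" "G v u" using irrefl sym by auto
qed

lemma nbrs_to_nat: "nbrs V G (to_nat x) = to_nat ` {y. E x y}"
  using sym by (auto simp: nbrs_def nat_vertices_def nat_edges_def dest: injD[OF inj_to_nat])

lemma deg_to_nat: "deg V G (to_nat x) = degree E x"
  unfolding deg_def degree_def nbrs_to_nat
  by (rule card_image) simp

lemma card_nat_vertices: "card V = card {x. \<exists>y. E x y}"
  unfolding nat_vertices_def by (rule card_image) simp

lemma graph_connected_if_rooted:
  assumes root: "E r r'" and reach: "\<And>x y. E x y \<Longrightarrow> E\<^sup>*\<^sup>* r x"
  shows "graph_connected V G"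
proof -
  have forward: "G\<^sup>*\<^sup>* (to_nat x) (to_nat y)" if "E\<^sup>*\<^sup>* x y" for x y
    using that
  proof induction
    case (step y z)
    show ?case by (rule rtranclp.rtrancl_into_rtrancl[OF step.IH]) (simp add: step.hyps)
  qed simp
  have backward: "G\<^sup>*\<^sup>* (to_nat y) (to_nat x)" if "E\<^sup>*\<^sup>* x y" for x y
    using that
  proof induction
    case (step y z)
    show ?case by (rule converse_rtranclp_into_rtranclp[OF _ step.IH]) (simp add: sym step.hyps)
  qed simp
  show ?thesis unfolding graph_connected_def
  proof (intro conjI ballI)
    show "V \<noteq> {}" using root by (auto simp: nat_vertices_def)
    fix u v assume "u \<in> V" "v \<in> V"
    then obtain x y x' y' where xy: "u = to_nat x" "v = to_nat y" "E x x'" "E y y'"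
      by (auto simp: nat_vertices_def)
    have "G\<^sup>*\<^sup>* u (to_nat r)" using backward[OF reach[OF xy(3)]] xy(1) by simp
    also have "G\<^sup>*\<^sup>* (to_nat r) v" using forward[OF reach[OF xy(4)]] xy(2) by simp
    finally show "G\<^sup>*\<^sup>* u v" .
  qed
qed

lemma degree_pos: "E x y \<Longrightarrow> 0 < degree E x"
  using finite_adjacent by (auto simp: degree_def card_gt_0_iff)

lemma degree_rule_pos:
  assumes "\<And>p q. 1 \<le> p \<Longrightarrow> 1 \<le> q \<Longrightarrow> 0 < f p q" "E x y"
  shows "0 < f (degree E x) (degree E y)"
  using assms degree_pos[OF assms(2)] degree_pos[OF sym[OF assms(2)]] by (simp add: Suc_le_eq)

lemma conductance_walk:
  assumes connected: "graph_connected V G"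
    and pos: "\<And>p q. 1 \<le> p \<Longrightarrow> 1 \<le> q \<Longrightarrow> 0 < f p q"
  shows "conductance_walk V G (local_cond f V G)"
proof
  show "simple_graph V G" by (rule simple_graph)
  show "graph_connected V G" by (rule connected)
next
  fix u assume "u \<in> V"
  then obtain x y where "u = to_nat x" "E x y" by (auto simp: nat_vertices_def)
  then show "nbrs V G u \<noteq> {}" by (auto simp: nbrs_to_nat)
next
  fix u v assume "G u v"
  then obtain x y where xy: "E x y" "u = to_nat x" "v = to_nat y" by (auto simp: nat_edges_def)
  show "0 < local_cond f V G u v"
    using degree_rule_pos[OF pos xy(1)] xy by (simp add: local_cond_def deg_to_nat)
qed

lemma hitting_subsolution_to_nat:
  "hitting_subsolution (nbrs V G) (local_cond f V G) (\<lambda>u. \<psi> (from_nat u)) (to_nat x)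
   \<longleftrightarrow> hitting_subsolution (\<lambda>x. {y. E x y}) (\<lambda>x y. f (degree E x) (degree E y)) \<psi> x"
  unfolding hitting_subsolution_def nbrs_to_nat by (simp add: sum.reindex local_cond_def deg_to_nat)

end

section \<open>A hub with a pendant path\<close>

datatype vertex = Hub | Path nat | Far nat | Near nat | Centre nat | Leaf nat nat

instance vertex :: countable by countable_datatype

lemma inj_on_vertex_constructors [simp]:
  "inj_on Path A" "inj_on Far A" "inj_on Near A" "inj_on Centre A" "inj_on (Leaf j) A"
  by (auto intro: inj_onI)

lemma vertex_notin_constructor_image [simp]:
  "Hub \<notin> Far ` A" "Hub \<notin> Near ` A" "Hub \<notin> Centre ` A" "Hub \<notin> Leaf j ` A"
  "Path i \<notin> Near ` A" "Path i \<notin> Centre ` A" "Centre j \<notin> Leaf j ` A"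
  by auto

definition path_arc :: "nat \<Rightarrow> vertex \<Rightarrow> vertex \<Rightarrow> bool" where
  "path_arc L x y \<longleftrightarrow> (x = Hub \<and> y = Path 1) \<or> (\<exists>i. 1 \<le> i \<and> i < L \<and> x = Path i \<and> y = Path (Suc i))"

definition with_path :: "nat \<Rightarrow> (vertex \<Rightarrow> vertex \<Rightarrow> bool) \<Rightarrow> vertex \<Rightarrow> vertex \<Rightarrow> bool" where
  "with_path L R = symclp (\<lambda>x y. path_arc L x y \<or> R x y)"

locale path_gadget =
  fixes L :: nat and R :: "vertex \<Rightarrow> vertex \<Rightarrow> bool"
  assumes L: "3 \<le> L"
    and R_off_path: "\<And>i x. \<not> R (Path i) x" "\<And>i x. \<not> R x (Path i)"
    and R_irrefl: "\<And>x. \<not> R x x"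
    and R_finite: "finite {x. \<exists>y. symclp R x y}"
    and R_reach: "\<And>x y. symclp R x y \<Longrightarrow> (symclp R)\<^sup>*\<^sup>* Hub x"
begin

abbreviation "E \<equiv> with_path L R"

lemma nbrs_Hub: "{y. E Hub y} = insert (Path 1) {y. symclp R Hub y}"
  by (auto simp: with_path_def symclp_def path_arc_def)

lemma nbrs_Path_1: "{y. E (Path 1) y} = {Hub, Path 2}"
  using L R_off_path by (auto simp: with_path_def symclp_def path_arc_def)

lemma nbrs_Path_inner: "2 \<le> i \<Longrightarrow> i < L \<Longrightarrow> {y. E (Path i) y} = {Path (i - 1), Path (Suc i)}"
  using R_off_path by (auto simp: with_path_def symclp_def path_arc_def)

lemma nbrs_Path_last: "{y. E (Path L) y} = {Path (L - 1)}"
  using L R_off_path by (auto simp: with_path_def symclp_def path_arc_def)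

lemma nbrs_Path_outside: "i = 0 \<or> L < i \<Longrightarrow> {y. E (Path i) y} = {}"
  using L R_off_path by (auto simp: with_path_def symclp_def path_arc_def)

lemma sum_nbrs_Path_1: "(\<Sum>y\<in>{y. E (Path 1) y}. g y) = g Hub + g (Path 2)"
  unfolding nbrs_Path_1 by simp

lemma sum_nbrs_Path_inner:
  "2 \<le> i \<Longrightarrow> i < L \<Longrightarrow> (\<Sum>y\<in>{y. E (Path i) y}. g y) = g (Path (i - 1)) + g (Path (Suc i))"
  by (simp add: nbrs_Path_inner)

lemma nbrs_off_path: "x \<noteq> Hub \<Longrightarrow> (\<And>i. x \<noteq> Path i) \<Longrightarrow> {y. E x y} = {y. symclp R x y}"
  by (auto simp: with_path_def symclp_def path_arc_def)

lemma degree_Path: "1 \<le> i \<Longrightarrow> i < L \<Longrightarrow> degree E (Path i) = 2"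
proof (cases "i = 1")
  case True
  show ?thesis unfolding True degree_def nbrs_Path_1 by simp
qed (simp add: degree_def nbrs_Path_inner)

lemma degree_Path_last: "degree E (Path L) = 1"
  by (simp add: degree_def nbrs_Path_last)

lemma Hub_in_support: "\<exists>y. E Hub y"
  by (auto simp: with_path_def symclp_def path_arc_def)

lemma Path_in_support: "1 \<le> i \<Longrightarrow> i \<le> L \<Longrightarrow> \<exists>y. E (Path i) y"
proof (cases "i = L")
  case True
  then have "E (Path i) (Path (L - 1))"
    using L by (auto simp: with_path_def symclp_def path_arc_def intro!: exI[of _ "L - 1"])
  then show ?thesis by blast
next
  case False
  moreover assume "1 \<le> i" "i \<le> L"
  ultimately have "E (Path i) (Path (Suc i))" by (auto simp: with_path_def symclp_def path_arc_def)
  then show ?thesis by blast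
qed

lemma support: "{x. \<exists>y. E x y} = insert Hub (Path ` {1..L}) \<union> {x. \<exists>y. symclp R x y}"
proof -
  have "insert Hub (Path ` {1..L}) \<subseteq> {x. \<exists>y. E x y}"
    using Hub_in_support Path_in_support by auto
  moreover have "{x. \<exists>y. E x y} \<subseteq> insert Hub (Path ` {1..L}) \<union> {x. \<exists>y. symclp R x y}"
    using L by (auto simp: with_path_def symclp_def path_arc_def)
  moreover have "{x. \<exists>y. symclp R x y} \<subseteq> {x. \<exists>y. E x y}"
    by (auto simp: with_path_def symclp_def)
  ultimately show ?thesis by blast
qed

lemma card_support:
  assumes "Hub \<in> {x. \<exists>y. symclp R x y}"
  shows "card {x. \<exists>y. E x y} \<le> L + card {x. \<exists>y. symclp R x y}"
proof -
  have "card {x. \<exists>y. E x y} \<le> card (Path ` {1..L}) + card {x. \<exists>y. symclp R x y}"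
    unfolding support using assms card_Un_le[of "Path ` {1..L}"] by (simp add: insert_absorb)
  then show ?thesis by (simp add: card_image)
qed

sublocale finite_graph E
proof
  show "finite {x. \<exists>y. E x y}" using R_finite by (simp add: support)
qed (auto simp: with_path_def symclp_def path_arc_def R_irrefl)

lemma reach_Path: "1 \<le> i \<Longrightarrow> i \<le> L \<Longrightarrow> E\<^sup>*\<^sup>* Hub (Path i)"
proof (induction i)
  case (Suc i)
  show ?case
  proof (cases "i = 0")
    case True
    then show ?thesis by (auto simp: with_path_def symclp_def path_arc_def)
  next
    case False
    then have "E\<^sup>*\<^sup>* Hub (Path i)" using Suc by simp
    moreover have "E (Path i) (Path (Suc i))"
      using Suc False by (auto simp: with_path_def symclp_def path_arc_def)
    ultimately show ?thesis by (rule rtranclp.rtrancl_into_rtrancl)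
  qed
qed simp

lemma reach: "E x y \<Longrightarrow> E\<^sup>*\<^sup>* Hub x"
proof -
  assume "E x y"
  then have "x \<in> insert Hub (Path ` {1..L}) \<or> symclp R x y"
    using L by (auto simp: with_path_def symclp_def path_arc_def)
  moreover have "(symclp R)\<^sup>*\<^sup>* Hub x \<Longrightarrow> E\<^sup>*\<^sup>* Hub x"
    by (erule rtranclp_mono[THEN predicate2D, rotated]) (auto simp: with_path_def symclp_def path_arc_def)
  ultimately show "E\<^sup>*\<^sup>* Hub x" using reach_Path R_reach by auto
qed

lemma connected: "graph_connected V G"
proof (rule graph_connected_if_rooted)
  show "E Hub (Path 1)" by (simp add: with_path_def symclp_def path_arc_def)
qed (rule reach)

end

section \<open>The biclique gadget\<close>

locale local_rule =
  fixes f :: "nat \<Rightarrow> nat \<Rightarrow> real"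
  assumes pos: "\<And>p q. 1 \<le> p \<Longrightarrow> 1 \<le> q \<Longrightarrow> 0 < f p q"
    and symm: "\<And>p q. f p q = f q p"

definition biclique_arc :: "nat \<Rightarrow> nat \<Rightarrow> vertex \<Rightarrow> vertex \<Rightarrow> bool" where
  "biclique_arc a b x y \<longleftrightarrow>
     (\<exists>j<b. x = Hub \<and> y = Near j) \<or> (\<exists>i<a - 1. \<exists>j<b. x = Far i \<and> y = Near j)"

locale biclique_gadget = local_rule +
  fixes L a b :: nat
  assumes L: "3 \<le> L" and a: "1 \<le> a" and b: "1 \<le> b"
begin

lemma nbrs_biclique_Hub: "{y. symclp (biclique_arc a b) Hub y} = Near ` {..<b}"
  by (auto simp: symclp_def biclique_arc_def)

lemma nbrs_Far: "{y. symclp (biclique_arc a b) (Far i) y} = (if i < a - 1 then Near ` {..<b} else {})"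
  by (auto simp: symclp_def biclique_arc_def)

lemma nbrs_Near: "{y. symclp (biclique_arc a b) (Near j) y} = (if j < b then insert Hub (Far ` {..<a - 1}) else {})"
  by (auto simp: symclp_def biclique_arc_def)

lemma support_biclique:
  "{x. \<exists>y. symclp (biclique_arc a b) x y} = insert Hub (Far ` {..<a - 1} \<union> Near ` {..<b})"
proof (intro equalityI subsetI)
  fix x assume "x \<in> insert Hub (Far ` {..<a - 1} \<union> Near ` {..<b})"
  then consider "x = Hub" | i where "i < a - 1" "x = Far i" | j where "j < b" "x = Near j" by auto
  then show "x \<in> {x. \<exists>y. symclp (biclique_arc a b) x y}"
  proof cases
    case 3
    then show ?thesis by (auto simp: symclp_def biclique_arc_def intro!: exI[of _ Hub])
  qed (use b in \<open>auto simp: symclp_def biclique_arc_def Suc_le_eq intro!: exI[of _ "Near 0"]\<close>)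
qed (auto simp: symclp_def biclique_arc_def)

sublocale path_gadget L "biclique_arc a b"
proof
  show "finite {x. \<exists>y. symclp (biclique_arc a b) x y}" by (simp add: support_biclique)
  fix x y assume "symclp (biclique_arc a b) x y"
  then consider "x = Hub" | j where "j < b" "x = Near j" | i where "i < a - 1" "x = Far i"
    by (auto simp: symclp_def biclique_arc_def)
  then show "(symclp (biclique_arc a b))\<^sup>*\<^sup>* Hub x"
  proof cases
    case (2 j)
    then show ?thesis by (auto simp: symclp_def biclique_arc_def)
  next
    case (3 i)
    then have "symclp (biclique_arc a b) Hub (Near 0)" "symclp (biclique_arc a b) (Near 0) (Far i)"
      using b by (auto simp: symclp_def biclique_arc_def)
    then show ?thesis using 3 by (meson converse_rtranclp_into_rtranclp r_into_rtranclp)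
  qed simp
qed (use L in \<open>auto simp: biclique_arc_def\<close>)

lemma sum_nbrs_Hub: "(\<Sum>y\<in>{y. E Hub y}. g y) = g (Path 1) + (\<Sum>j<b. g (Near j))"
  by (simp add: nbrs_Hub nbrs_biclique_Hub sum.reindex)

lemma degree_Hub: "degree E Hub = Suc b"
  by (simp add: degree_def nbrs_Hub nbrs_biclique_Hub card_image card_insert_if)

lemma nbrs_Far_E: "i < a - 1 \<Longrightarrow> {y. E (Far i) y} = Near ` {..<b}"
  by (simp add: nbrs_off_path nbrs_Far)

lemma nbrs_Near_E: "j < b \<Longrightarrow> {y. E (Near j) y} = insert Hub (Far ` {..<a - 1})"
  by (simp add: nbrs_off_path nbrs_Near)

lemma degree_Far: "i < a - 1 \<Longrightarrow> degree E (Far i) = b"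
  by (simp add: degree_def nbrs_Far_E card_image)

lemma degree_Near: "j < b \<Longrightarrow> degree E (Near j) = a"
  using a by (simp add: degree_def nbrs_Near_E card_image card_insert_if)

text \<open>The constants make the subsolution inequality an equality at Path 1 and at the Near
  vertices; at the hub its slack is b * f a (b + 1).\<close>
definition drift :: real where
  "drift = real b * (f a (Suc b) + real (a - 1) * f a b) / f 2 2"

definition hub_gap :: real where
  "hub_gap = drift * f 2 2 / f 2 (Suc b)"

definition near_gap :: real where
  "near_gap = real (a - 1) * f a b / f a (Suc b)"

definition hub_level :: real where
  "hub_level = drift * (real L - 2) + hub_gap"

text \<open>The truncated subtraction makes the potential vanish on Path (L - 1) and Path L.\<close>
fun potential :: "vertex \<Rightarrow> real" where
  "potential Hub = hub_level"
| "potential (Path i) = drift * real (L - 1 - i)"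
| "potential (Far i) = hub_level + near_gap + 1"
| "potential (Near j) = hub_level + near_gap"
| "potential (Centre j) = 0"
| "potential (Leaf j k) = 0"

lemma f_pos: "0 < f a b" "0 < f a (Suc b)" "0 < f 2 (Suc b)" "0 < f 2 2"
  using pos a b by auto

lemma drift_eq: "drift * f 2 2 = real b * (f a (Suc b) + real (a - 1) * f a b)"
  using f_pos by (simp add: drift_def)

lemma hub_gap_eq: "hub_gap * f 2 (Suc b) = drift * f 2 2"
  using f_pos by (simp add: hub_gap_def)

lemma near_gap_eq: "near_gap * f a (Suc b) = real (a - 1) * f a b"
  using f_pos by (simp add: near_gap_def)

lemma gaps_nonneg: "0 \<le> drift" "0 \<le> hub_gap" "0 \<le> near_gap" "0 \<le> hub_level"
  using f_pos L by (simp_all add: drift_def hub_gap_def near_gap_def hub_level_def)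

lemma potential_nonneg: "0 \<le> potential x"
  using gaps_nonneg by (cases x) auto

abbreviation "cond x y \<equiv> f (degree E x) (degree E y)"

abbreviation "subsolution \<equiv> hitting_subsolution (\<lambda>x. {y. E x y}) cond potential"

lemma subsolution_Hub: "subsolution Hub"
proof -
  have "(\<Sum>y\<in>{y. E Hub y}. cond Hub y * (potential Hub - potential y))
      = f (Suc b) 2 * hub_gap - real b * (f (Suc b) a * near_gap)"
    using L by (simp add: sum_nbrs_Hub degree_Hub degree_Near degree_Path hub_level_def of_nat_diff)
  also have "\<dots> = real b * f a (Suc b)"
    using hub_gap_eq near_gap_eq drift_eq symm by (simp add: algebra_simps)
  also have "\<dots> \<le> f (Suc b) 2 + real b * f (Suc b) a"
    using f_pos symm by (simp add: less_imp_le)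
  also have "\<dots> = (\<Sum>y\<in>{y. E Hub y}. cond Hub y)"
    using L by (simp add: sum_nbrs_Hub degree_Hub degree_Near degree_Path)
  finally show ?thesis by (simp add: hitting_subsolution_def)
qed

lemma subsolution_Path_1: "subsolution (Path 1)"
proof -
  have "(\<Sum>y\<in>{y. E (Path 1) y}. cond (Path 1) y * (potential (Path 1) - potential y))
      = f 2 2 * drift - f 2 (Suc b) * hub_gap"
    unfolding sum_nbrs_Path_1 using L
    by (simp add: degree_Hub degree_Path hub_level_def of_nat_diff algebra_simps)
  also have "\<dots> = 0" using hub_gap_eq by (simp add: algebra_simps)
  also have "\<dots> \<le> (\<Sum>y\<in>{y. E (Path 1) y}. cond (Path 1) y)"
    unfolding sum_nbrs_Path_1 using L f_pos by (simp add: degree_Hub degree_Path less_imp_le)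
  finally show ?thesis by (simp add: hitting_subsolution_def)
qed

lemma subsolution_Path_inner:
  assumes "2 \<le> i" "i \<le> L - 2"
  shows "subsolution (Path i)"
proof -
  have "(\<Sum>y\<in>{y. E (Path i) y}. cond (Path i) y * (potential (Path i) - potential y)) = 0"
    using assms L by (simp add: sum_nbrs_Path_inner degree_Path of_nat_diff algebra_simps)
  also have "\<dots> \<le> (\<Sum>y\<in>{y. E (Path i) y}. cond (Path i) y)"
    using assms L f_pos by (simp add: sum_nbrs_Path_inner degree_Path less_imp_le)
  finally show ?thesis by (simp add: hitting_subsolution_def)
qed

lemma subsolution_Far: "subsolution (Far i)"
proof (cases "i < a - 1")
  case True
  then show ?thesis by (simp add: hitting_subsolution_def nbrs_Far_E sum.reindex)
qed (simp add: hitting_subsolution_isolated nbrs_off_path nbrs_Far)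

lemma subsolution_Near: "subsolution (Near j)"
proof (cases "j < b")
  case True
  have "(\<Sum>y\<in>{y. E (Near j) y}. cond (Near j) y * (potential (Near j) - potential y))
      = f a (Suc b) * near_gap - real (a - 1) * f a b"
    using True by (simp add: nbrs_Near_E sum.reindex degree_Near degree_Hub degree_Far)
  also have "\<dots> = 0" using near_gap_eq by (simp add: algebra_simps)
  also have "\<dots> \<le> (\<Sum>y\<in>{y. E (Near j) y}. cond (Near j) y)"
    using True f_pos by (simp add: nbrs_Near_E sum.reindex degree_Near degree_Hub degree_Far less_imp_le)
  finally show ?thesis by (simp add: hitting_subsolution_def)
qed (simp add: hitting_subsolution_isolated nbrs_off_path nbrs_Near)

lemma subsolution: "0 < potential x \<Longrightarrow> subsolution x"
proof (cases x)
  case (Path i)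
  moreover assume "0 < potential x"
  ultimately consider "i = 0 \<or> L < i" | "i = 1" | "2 \<le> i" "i \<le> L - 2"
    using gaps_nonneg by fastforce
  then show ?thesis
    using Path subsolution_Path_1 subsolution_Path_inner
    by cases (simp_all add: hitting_subsolution_isolated nbrs_Path_outside)
qed (simp_all add: subsolution_Hub subsolution_Far subsolution_Near)

lemma card_support_le: "card {x. \<exists>y. E x y} \<le> L + a + b"
proof -
  have "card (insert Hub (Far ` {..<a - 1} \<union> Near ` {..<b})) \<le> 1 + ((a - 1) + b)"
    using card_insert_le_m1 card_Un_le[of "Far ` {..<a - 1}" "Near ` {..<b}"]
    by (simp add: card_image)
  then show ?thesis
    using card_support a by (simp add: support_biclique)
qed

lemma cyc_sum_ge:
  assumes "set xs = V"
  shows "drift * (real L - 2) \<le> cyc_sum V G (local_cond f V G) xs"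
proof -
  interpret conductance_walk V G "local_cond f V G"
    by (rule conductance_walk[OF connected pos])
  have "potential (from_nat (to_nat Hub)) - potential (from_nat (to_nat (Path L)))
      \<le> cyc_sum V G (local_cond f V G) xs"
  proof (rule cyc_sum_ge_subsolution_diff[OF _ _ assms])
    fix u assume "u \<in> V" "0 < potential (from_nat u)"
    then show "hitting_subsolution N (local_cond f V G) (\<lambda>u. potential (from_nat u)) u"
      using hitting_subsolution_to_nat subsolution by (auto simp: nat_vertices_def)
  qed (use potential_nonneg L Hub_in_support Path_in_support[of L] in auto)
  then show ?thesis using gaps_nonneg by (simp add: hub_level_def)
qed

end

section \<open>The star gadget\<close>

definition star_arc :: "nat \<Rightarrow> nat \<Rightarrow> vertex \<Rightarrow> vertex \<Rightarrow> bool" where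
  "star_arc a b x y \<longleftrightarrow>
     (\<exists>j<b - 1. x = Hub \<and> y = Centre j) \<or> (\<exists>j<b - 1. \<exists>k<a - 1. x = Centre j \<and> y = Leaf j k)"

locale star_gadget = local_rule +
  fixes L a b :: nat
  assumes L: "3 \<le> L" and a: "1 \<le> a" and b: "2 \<le> b"
begin

lemma nbrs_star_Hub: "{y. symclp (star_arc a b) Hub y} = Centre ` {..<b - 1}"
  by (auto simp: symclp_def star_arc_def)

lemma nbrs_Centre:
  "{y. symclp (star_arc a b) (Centre j) y} = (if j < b - 1 then insert Hub (Leaf j ` {..<a - 1}) else {})"
  by (auto simp: symclp_def star_arc_def)

lemma nbrs_Leaf:
  "{y. symclp (star_arc a b) (Leaf j k) y} = (if j < b - 1 \<and> k < a - 1 then {Centre j} else {})"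
  by (auto simp: symclp_def star_arc_def)

lemma support_star:
  "{x. \<exists>y. symclp (star_arc a b) x y}
   = insert Hub (Centre ` {..<b - 1} \<union> (\<lambda>(j, k). Leaf j k) ` ({..<b - 1} \<times> {..<a - 1}))"
proof (intro equalityI subsetI)
  fix x assume "x \<in> insert Hub (Centre ` {..<b - 1} \<union> (\<lambda>(j, k). Leaf j k) ` ({..<b - 1} \<times> {..<a - 1}))"
  then consider "x = Hub" | j where "j < b - 1" "x = Centre j"
    | j k where "j < b - 1" "k < a - 1" "x = Leaf j k"
    by auto
  then show "x \<in> {x. \<exists>y. symclp (star_arc a b) x y}"
  proof cases
    case 1
    then show ?thesis
      using b by (auto simp: symclp_def star_arc_def intro!: exI[of _ "Centre 0"] exI[of _ 0])
  qed (auto simp: symclp_def star_arc_def)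
qed (auto simp: symclp_def star_arc_def)

sublocale path_gadget L "star_arc a b"
proof
  show "finite {x. \<exists>y. symclp (star_arc a b) x y}" by (simp add: support_star)
  fix x y assume "symclp (star_arc a b) x y"
  then consider "x = Hub" | j where "j < b - 1" "x = Centre j"
    | j k where "j < b - 1" "k < a - 1" "x = Leaf j k"
    by (auto simp: symclp_def star_arc_def)
  then show "(symclp (star_arc a b))\<^sup>*\<^sup>* Hub x"
  proof cases
    case (2 j)
    then show ?thesis by (auto simp: symclp_def star_arc_def)
  next
    case (3 j k)
    then have "symclp (star_arc a b) Hub (Centre j)" "symclp (star_arc a b) (Centre j) (Leaf j k)"
      by (auto simp: symclp_def star_arc_def)
    then show ?thesis using 3 by (meson converse_rtranclp_into_rtranclp r_into_rtranclp)
  qed simp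
qed (use L in \<open>auto simp: star_arc_def\<close>)

lemma sum_nbrs_Hub: "(\<Sum>y\<in>{y. E Hub y}. g y) = g (Path 1) + (\<Sum>j<b - 1. g (Centre j))"
  by (simp add: nbrs_Hub nbrs_star_Hub sum.reindex)

lemma nbrs_Centre_E: "j < b - 1 \<Longrightarrow> {y. E (Centre j) y} = insert Hub (Leaf j ` {..<a - 1})"
  by (simp add: nbrs_off_path nbrs_Centre)

lemma degree_Hub: "degree E Hub = b"
  using b by (simp add: degree_def nbrs_Hub nbrs_star_Hub card_image card_insert_if)

lemma degree_Centre: "j < b - 1 \<Longrightarrow> degree E (Centre j) = a"
  using a by (simp add: degree_def nbrs_Centre_E card_image card_insert_if)

text \<open>The potential vanishes on the target star and is plateau off the path elsewhere;
  plateau and path_offset make the subsolution inequality an equality at the hub and at Path 1.\<close>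
definition plateau :: real where
  "plateau = f 2 2 * (2 * real L - 3) / (3 * f b a)"

definition path_offset :: real where
  "path_offset = f 2 2 * (2 * real L - 3) / (3 * f b 2)"

text \<open>The second difference -2/3 of this concave quadratic leaves the inner path vertices
  slack.\<close>
definition bend :: "nat \<Rightarrow> real" where
  "bend i = (real i - 1) * (2 * real L - 1 - real i) / 3"

definition target :: "nat \<Rightarrow> vertex set" where
  "target j = insert (Centre j) (Leaf j ` {..<a - 1})"

fun potential :: "nat \<Rightarrow> vertex \<Rightarrow> real" where
  "potential j Hub = plateau"
| "potential j (Path i) = plateau + path_offset + bend i"
| "potential j (Centre j') = (if j' = j then 0 else plateau)"
| "potential j (Leaf j' k) = (if j' = j then 0 else plateau)"
| "potential j (Far i) = plateau"
| "potential j (Near i) = plateau"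

lemma f_pos: "0 < f b a" "0 < f b 2" "0 < f 2 2" "0 < f 2 (Suc 0)"
  using pos a b by auto

lemma plateau_eq: "f b a * plateau = f 2 2 * (2 * real L - 3) / 3"
  using f_pos by (simp add: plateau_def)

lemma path_offset_eq: "f b 2 * path_offset = f 2 2 * (2 * real L - 3) / 3"
  using f_pos by (simp add: path_offset_def)

lemma offsets_nonneg: "0 \<le> plateau" "0 \<le> path_offset"
  using f_pos L by (simp_all add: plateau_def path_offset_def)

lemma bend_1: "bend (Suc 0) = 0"
  by (simp add: bend_def)

lemma bend_2: "bend 2 = (2 * real L - 3) / 3"
  by (simp add: bend_def)

lemma bend_second_difference: "1 \<le> i \<Longrightarrow> 2 * bend i - bend (i - 1) - bend (Suc i) = 2 / 3"
  by (simp add: bend_def of_nat_diff field_simps)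

lemma bend_last_steps: "bend (L - 1) - bend (L - 2) = 1" "bend L - bend (L - 1) = 1 / 3"
  using L by (simp_all add: bend_def of_nat_diff field_simps)

lemma bend_nonneg: "1 \<le> i \<Longrightarrow> i \<le> L \<Longrightarrow> 0 \<le> bend i"
  by (simp add: bend_def)

abbreviation "cond x y \<equiv> f (degree E x) (degree E y)"

lemma cond_nonneg: "\<forall>y\<in>{y. E x y}. 0 \<le> cond x y"
  using degree_rule_pos[where f = f, OF pos] by (auto intro: less_imp_le)

abbreviation "subsolution j \<equiv> hitting_subsolution (\<lambda>x. {y. E x y}) cond (potential j)"

lemma subsolution_Hub: "j < b - 1 \<Longrightarrow> subsolution j Hub"
proof -
  assume j: "j < b - 1"
  have "(\<Sum>j'<b - 1. f b a * (plateau - potential j (Centre j'))) = f b a * plateau"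
    using j by (simp add: if_distrib cong: if_cong)
  then have "(\<Sum>y\<in>{y. E Hub y}. cond Hub y * (potential j Hub - potential j y))
      = f b a * plateau - f b 2 * path_offset"
    unfolding sum_nbrs_Hub using L by (simp add: degree_Hub degree_Path degree_Centre bend_1)
  also have "\<dots> = 0" using plateau_eq path_offset_eq by simp
  also have "\<dots> \<le> (\<Sum>y\<in>{y. E Hub y}. cond Hub y)"
    using cond_nonneg by (intro sum_nonneg) simp
  finally show ?thesis by (simp add: hitting_subsolution_def)
qed

lemma subsolution_Path_1: "subsolution j (Path 1)"
proof -
  have "(\<Sum>y\<in>{y. E (Path 1) y}. cond (Path 1) y * (potential j (Path 1) - potential j y))
      = f 2 b * path_offset - f 2 2 * bend 2"
    unfolding sum_nbrs_Path_1 using L by (simp add: degree_Hub degree_Path bend_1)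
  also have "\<dots> = 0" using path_offset_eq symm by (simp add: bend_2)
  also have "\<dots> \<le> (\<Sum>y\<in>{y. E (Path 1) y}. cond (Path 1) y)"
    unfolding sum_nbrs_Path_1 using L f_pos symm by (simp add: degree_Hub degree_Path less_imp_le)
  finally show ?thesis by (simp add: hitting_subsolution_def)
qed

lemma subsolution_Path_inner:
  assumes "2 \<le> i" "i \<le> L - 2"
  shows "subsolution j (Path i)"
proof -
  have "(\<Sum>y\<in>{y. E (Path i) y}. cond (Path i) y * (potential j (Path i) - potential j y))
      = f 2 2 * (2 * bend i - bend (i - 1) - bend (Suc i))"
    using assms L by (simp add: sum_nbrs_Path_inner degree_Path algebra_simps)
  also have "\<dots> = f 2 2 * (2 / 3)"
    using assms by (simp only: bend_second_difference)
  also have "\<dots> \<le> (\<Sum>y\<in>{y. E (Path i) y}. cond (Path i) y)"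
    using assms L f_pos by (simp add: sum_nbrs_Path_inner degree_Path)
  finally show ?thesis by (simp add: hitting_subsolution_def)
qed

lemma subsolution_Path_before_last: "subsolution j (Path (L - 1))"
proof -
  have "(\<Sum>y\<in>{y. E (Path (L - 1)) y}. cond (Path (L - 1)) y * (potential j (Path (L - 1)) - potential j y))
      = f 2 2 * (bend (L - 1) - bend (L - 2)) - f 2 1 * (bend L - bend (L - 1))"
    using L by (simp add: sum_nbrs_Path_inner degree_Path degree_Path_last numeral_2_eq_2 algebra_simps)
  also have "\<dots> = f 2 2 - f 2 1 / 3"
    by (simp only: bend_last_steps)
  also have "\<dots> \<le> (\<Sum>y\<in>{y. E (Path (L - 1)) y}. cond (Path (L - 1)) y)"
    using L f_pos by (simp add: sum_nbrs_Path_inner degree_Path degree_Path_last numeral_2_eq_2)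
  finally show ?thesis by (simp add: hitting_subsolution_def)
qed

lemma subsolution_Path_last: "subsolution j (Path L)"
proof -
  have "(\<Sum>y\<in>{y. E (Path L) y}. cond (Path L) y * (potential j (Path L) - potential j y))
      = f 1 2 * (bend L - bend (L - 1))"
    using L by (simp add: nbrs_Path_last degree_Path degree_Path_last)
  also have "\<dots> = f 1 2 / 3"
    by (simp only: bend_last_steps)
  also have "\<dots> \<le> (\<Sum>y\<in>{y. E (Path L) y}. cond (Path L) y)"
    using L f_pos symm by (simp add: nbrs_Path_last degree_Path degree_Path_last)
  finally show ?thesis by (simp add: hitting_subsolution_def)
qed

lemma subsolution_Path: "subsolution j (Path i)"
proof -
  consider "i = 0 \<or> L < i" | "i = 1" | "2 \<le> i" "i \<le> L - 2" | "i = L - 1" | "i = L"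
    using L by linarith
  then show ?thesis
    using subsolution_Path_1 subsolution_Path_inner subsolution_Path_before_last subsolution_Path_last
    by cases (auto simp: hitting_subsolution_isolated nbrs_Path_outside)
qed

lemma subsolution_off_target:
  assumes "j < b - 1" "x \<notin> target j" "0 < potential j x"
  shows "subsolution j x"
proof (cases x)
  case (Centre j')
  then have "j' \<noteq> j" using assms by auto
  have "\<forall>y\<in>{y. E x y}. potential j y = potential j x"
    using Centre \<open>j' \<noteq> j\<close> by (auto simp: nbrs_off_path nbrs_Centre)
  then show ?thesis by (rule hitting_subsolution_if_locally_constant[OF _ cond_nonneg])
next
  case (Leaf j' k)
  then have "j' \<noteq> j" using assms by (auto simp: target_def)
  have "\<forall>y\<in>{y. E x y}. potential j y = potential j x"
    using Leaf \<open>j' \<noteq> j\<close> by (auto simp: nbrs_off_path nbrs_Leaf)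
  then show ?thesis by (rule hitting_subsolution_if_locally_constant[OF _ cond_nonneg])
qed (use assms subsolution_Hub subsolution_Path in
      \<open>auto simp: hitting_subsolution_isolated nbrs_off_path symclp_def star_arc_def\<close>)

lemma target_in_support: "j < b - 1 \<Longrightarrow> y \<in> target j \<Longrightarrow> \<exists>y'. E y y'"
  using support support_star by (auto simp: target_def)

lemma potential_target: "y \<in> target j \<Longrightarrow> potential j y = 0"
  by (auto simp: target_def)

lemma potential_ge_plateau:
  assumes "\<exists>y. E x y" "x \<notin> target j"
  shows "plateau \<le> potential j x"
proof -
  have "x \<in> insert Hub (Path ` {1..L}) \<union> {x. \<exists>y. symclp (star_arc a b) x y}"
    using assms(1) support by blast
  then show ?thesis
    using assms(2) offsets_nonneg bend_nonneg
    by (cases x) (auto simp: support_star target_def)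
qed

lemma hitting_time_ge_plateau:
  assumes j: "j < b - 1" and x: "\<exists>x'. E x x'" "x \<notin> target j" and y: "y \<in> target j"
  shows "plateau \<le> hitting_time V G (local_cond f V G) (to_nat x) (to_nat y)"
proof -
  interpret conductance_walk V G "local_cond f V G"
    by (rule conductance_walk[OF connected pos])
  have "potential j (from_nat (to_nat x)) \<le> hitting_time V G (local_cond f V G) (to_nat x) (to_nat y)"
  proof (rule hitting_time_ge_subsolution)
    fix u assume "u \<in> V" "u \<noteq> to_nat y" "0 < potential j (from_nat u)"
    then obtain z where "u = to_nat z" "0 < potential j z" by (auto simp: nat_vertices_def)
    then show "hitting_subsolution N (local_cond f V G) (\<lambda>u. potential j (from_nat u)) u"
      using hitting_subsolution_to_nat subsolution_off_target[OF j] potential_target by force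
  qed (use x y j target_in_support potential_target in auto)
  moreover have "plateau \<le> potential j x" using potential_ge_plateau x by blast
  ultimately show ?thesis by simp
qed

lemma cyc_sum_ge:
  assumes xs: "distinct xs" "set xs = V"
  shows "real (b - 1) * plateau \<le> cyc_sum V G (local_cond f V G) xs"
proof -
  interpret conductance_walk V G "local_cond f V G"
    by (rule conductance_walk[OF connected pos])
  have "real (card {..<b - 1}) * plateau \<le> cyc_sum V G (local_cond f V G) xs"
  proof (rule cyc_sum_ge_disjoint_targets[OF xs finite_lessThan])
    fix j assume "j \<in> {..<b - 1}"
    moreover have "to_nat Hub \<in> V" "to_nat Hub \<notin> to_nat ` target j"
      using Hub_in_support by (auto simp: target_def dest: injD[OF inj_to_nat])
    then have "\<not> V \<subseteq> to_nat ` target j" by blast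
    ultimately show "to_nat ` target j \<subseteq> V \<and> to_nat ` target j \<noteq> {} \<and> \<not> V \<subseteq> to_nat ` target j"
      using target_in_support by (auto simp: target_def)
  next
    fix i j :: nat assume "i \<noteq> j"
    then show "to_nat ` target i \<inter> to_nat ` target j = {}"
      by (auto simp: target_def dest: injD[OF inj_to_nat])
  next
    fix j u v assume "j \<in> {..<b - 1}" "u \<in> V" "u \<notin> to_nat ` target j" "v \<in> to_nat ` target j"
    then obtain x y x' where "j < b - 1" "u = to_nat x" "E x x'" "x \<notin> target j" "v = to_nat y" "y \<in> target j"
      by (auto simp: nat_vertices_def)
    then show "plateau \<le> hitting_time V G (local_cond f V G) u v"
      using hitting_time_ge_plateau by blast
  qed
  then show ?thesis by simp
qed

lemma card_support_le: "card {x. \<exists>y. E x y} \<le> L + 1 + (b - 1) * a"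
proof -
  let ?centres = "Centre ` {..<b - 1}" and ?leaves = "(\<lambda>(j, k). Leaf j k) ` ({..<b - 1} \<times> {..<a - 1})"
  have "card (insert Hub (?centres \<union> ?leaves)) \<le> Suc (card (?centres \<union> ?leaves))"
    by (simp add: card_insert_if)
  moreover have "card (?centres \<union> ?leaves) \<le> card ?centres + card ?leaves" by (rule card_Un_le)
  moreover have "card ?leaves \<le> (b - 1) * (a - 1)"
    using card_image_le[of "{..<b - 1} \<times> {..<a - 1}"] by (simp add: card_cartesian_product)
  moreover have "(b - 1) + (b - 1) * (a - 1) = (b - 1) * a"
    using a by (cases a) simp_all
  ultimately have "card (insert Hub (?centres \<union> ?leaves)) \<le> 1 + (b - 1) * a"
    by (simp add: card_image)
  then show ?thesis
    using card_support by (simp add: support_star)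
qed

end

section \<open>Quadratic cover time forces rough equivalence\<close>

lemma deg_ge_one:
  assumes "simple_graph V E" "E u v"
  shows "1 \<le> deg V E u"
proof -
  have "v \<in> nbrs V E u" using assms by (auto simp: simple_graph_def nbrs_def)
  then show ?thesis using finite_nbrs[OF assms(1)] by (auto simp: deg_def Suc_le_eq card_gt_0_iff)
qed

lemma roughly_equivalent_min_deg_rule_if_bounds:
  fixes f :: "nat \<Rightarrow> nat \<Rightarrow> real"
  assumes "0 < \<alpha>" "\<alpha> \<le> \<beta>"
    and bounds: "\<And>p q. 1 \<le> p \<Longrightarrow> 1 \<le> q \<Longrightarrow> \<alpha> \<le> f p q * real (min p q) \<and> f p q * real (min p q) \<le> \<beta>"
  shows "roughly_equivalent min_deg_rule (local_cond f)"
proof -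
  have "\<alpha> * min_deg_rule V E u v \<le> local_cond f V E u v \<and> local_cond f V E u v \<le> \<beta> * min_deg_rule V E u v"
    if "simple_graph V E" "E u v" for V E u v
  proof -
    define p q where "p = deg V E u" and "q = deg V E v"
    have pq: "1 \<le> p" "1 \<le> q"
      using that deg_ge_one[of V E] by (auto simp: p_def q_def simple_graph_def)
    then have "0 < real (min p q)" by simp
    then show ?thesis using bounds[OF pq]
      by (simp add: min_deg_rule_def local_cond_def p_def q_def divide_le_eq le_divide_eq ac_simps)
  qed
  then show ?thesis unfolding roughly_equivalent_def using assms by blast
qed

lemma biclique_arith_degree_one:
  fixes x F S :: real
  assumes x: "1 \<le> x" and S: "0 \<le> S" and h: "x * F * (1 + x) \<le> S * (x + 2)^2"
  shows "F \<le> 9/2 * S"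
proof -
  have xx: "x \<le> x * x" using x by (simp add: mult_le_cancel_left1)
  have e: "(x + 2)^2 = x * x + 4 * x + 4" by (simp add: power2_eq_square algebra_simps)
  have e2: "x * (1 + x) = x + x * x" by (simp add: algebra_simps)
  have e3: "9/2 * (x * (1 + x)) = 9/2 * x + 9/2 * (x * x)" by (simp add: algebra_simps)
  have q: "(x + 2)^2 \<le> 9/2 * (x * (1 + x))" unfolding e e3 using xx x by linarith
  have p: "0 < x * (1 + x)" using x by simp
  have "x * (1 + x) * F \<le> S * (x + 2)^2" using h by (simp add: algebra_simps)
  also have "\<dots> \<le> S * (9/2 * (x * (1 + x)))" by (rule mult_left_mono[OF q S])
  finally have "x * (1 + x) * F \<le> x * (1 + x) * (9/2 * S)" by (simp add: algebra_simps)
  then show ?thesis using p by (rule mult_left_le_imp_le)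
qed

lemma biclique_arith:
  fixes p q F S :: real
  assumes p: "2 \<le> p" and pq: "p \<le> q" and S: "0 \<le> S" and F: "0 \<le> F"
    and h: "q * ((p - 1) * F) * (p + q) \<le> S * (p + q + 1)^2"
  shows "p * F \<le> 8 * S"
proof -
  define t where "t = p + q"
  have t4: "4 \<le> t" using p pq by (simp add: t_def)
  have tt: "4 * t \<le> t * t" using t4 by (simp add: mult_right_mono)
  have e: "(t + 1)^2 = t * t + 2 * t + 1" by (simp add: power2_eq_square algebra_simps)
  have a1: "(t + 1)^2 \<le> 2 * (t * t)" unfolding e using tt t4 by linarith
  have a2: "p \<le> 2 * (p - 1)" using p by simp
  have a3: "t \<le> 2 * q" using pq by (simp add: t_def)
  have pos: "0 < q * (p - 1) * t" using p pq t4 by simp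
  have "p * (t + 1)^2 \<le> (2 * (p - 1)) * (2 * (t * t))"
    by (rule mult_mono[OF a2 a1]) (use p in auto)
  also have "\<dots> = 4 * (p - 1) * t * t" by simp
  also have "\<dots> \<le> 4 * (p - 1) * t * (2 * q)" using a3 p t4 by (intro mult_left_mono) auto
  finally have b: "p * (t + 1)^2 \<le> 8 * (q * (p - 1) * t)" by (simp add: algebra_simps)
  have "(q * (p - 1) * t) * (p * F) = p * (q * ((p - 1) * F) * t)" by (simp add: algebra_simps)
  also have "\<dots> \<le> p * (S * (t + 1)^2)" using h p by (intro mult_left_mono) (auto simp: t_def)
  also have "\<dots> = S * (p * (t + 1)^2)" by simp
  also have "\<dots> \<le> S * (8 * (q * (p - 1) * t))" using b S by (rule mult_left_mono)
  finally have "(q * (p - 1) * t) * (p * F) \<le> (q * (p - 1) * t) * (8 * S)" by (simp add: algebra_simps)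
  then show ?thesis using pos by (rule mult_left_le_imp_le)
qed

lemma star_arith:
  fixes A B F s K :: real
  assumes A: "1 \<le> A" and B: "1 \<le> B" and s: "0 \<le> s" and KF: "0 \<le> K * F"
    and h: "B * s * (2 * (B * A) + 1) \<le> 3 * K * F * (2 * (B * A) + 3)^2"
  shows "2 * s \<le> 75 * K * A * F"
proof -
  define M where "M = B * A"
  have M1: "1 \<le> M" using mult_mono[of 1 B 1 A] A B by (simp add: M_def)
  have MM: "M \<le> M * M" using M1 by (simp add: mult_le_cancel_left1)
  have e: "(2 * M + 3)^2 = 4 * (M * M) + 12 * M + 9" by (simp add: power2_eq_square algebra_simps)
  have c1: "(2 * M + 3)^2 \<le> 25 * (M * M)" unfolding e using MM M1 by linarith
  have "M * M * (2 * s) \<le> M * s * (2 * M + 1)" using M1 s by (simp add: algebra_simps)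
  also have "\<dots> = A * (B * s * (2 * M + 1))" by (simp add: M_def algebra_simps)
  also have "\<dots> \<le> A * (3 * K * F * (2 * M + 3)^2)" using h A by (intro mult_left_mono) (auto simp: M_def)
  also have "\<dots> = (3 * A * (K * F)) * (2 * M + 3)^2" by (simp add: algebra_simps)
  also have "\<dots> \<le> (3 * A * (K * F)) * (25 * (M * M))" using c1 A KF by (intro mult_left_mono) auto
  finally have "M * M * (2 * s) \<le> M * M * (75 * K * A * F)" by (simp add: algebra_simps)
  then show ?thesis using M1 by (simp add: mult_le_cancel_left_pos)
qed

locale quadratic_cover_time = local_rule +
  fixes K :: real
  assumes K: "0 < K"
    and bounded: "\<And>V E. simple_graph V E \<Longrightarrow> graph_connected V E \<Longrightarrow>
        cyclic_cover_time V E (local_cond f V E) \<le> K * real (card V) ^ 2"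
begin

lemma quadratic_bound_if_cyc_sum_ge:
  assumes "simple_graph V E" "graph_connected V E" "card V \<le> n"
    and "\<And>xs. distinct xs \<Longrightarrow> set xs = V \<Longrightarrow> R \<le> cyc_sum V E (local_cond f V E) xs"
  shows "R \<le> K * real n ^ 2"
proof -
  have "R \<le> cyclic_cover_time V E (local_cond f V E)"
    using assms by (intro cyclic_cover_time_ge) (auto simp: simple_graph_def graph_connected_def)
  also have "\<dots> \<le> K * real (card V) ^ 2" using bounded assms by blast
  also have "\<dots> \<le> K * real n ^ 2" using assms(3) K by (simp add: power_mono)
  finally show ?thesis .
qed

lemma biclique_bound:
  assumes a: "1 \<le> a" and b: "1 \<le> b"
  shows "real b * (f a (Suc b) + real (a - 1) * f a b) * real (a + b)
       \<le> 4 * K * f 2 2 * real (a + b + 1) ^ 2"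
proof -
  interpret biclique_gadget f "a + b + 2" a b
    using a b by unfold_locales auto
  have "drift * (real (a + b + 2) - 2) \<le> K * real (2 * (a + b + 1)) ^ 2"
    using card_support_le card_nat_vertices cyc_sum_ge
    by (intro quadratic_bound_if_cyc_sum_ge[OF simple_graph connected]) auto
  then have bound: "drift * real (a + b) * f 2 2 \<le> K * real (2 * (a + b + 1)) ^ 2 * f 2 2"
    using f_pos by (intro mult_right_mono) auto
  have "real b * (f a (Suc b) + real (a - 1) * f a b) * real (a + b) = drift * f 2 2 * real (a + b)"
    by (simp only: drift_eq)
  also have "\<dots> = drift * real (a + b) * f 2 2" by (simp only: ac_simps)
  also have "\<dots> \<le> K * real (2 * (a + b + 1)) ^ 2 * f 2 2" by (rule bound)
  also have "\<dots> = 4 * K * f 2 2 * real (a + b + 1) ^ 2"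
    by (simp only: of_nat_mult power_mult_distrib) simp
  finally show ?thesis .
qed

lemma star_bound:
  assumes a: "1 \<le> a" and b: "2 \<le> b"
  shows "real (b - 1) * f 2 2 * (2 * real ((b - 1) * a) + 1)
       \<le> 3 * K * f b a * (2 * real ((b - 1) * a) + 3) ^ 2"
proof -
  define m where "m = (b - 1) * a"
  have "1 \<le> m" using a b by (simp add: m_def)
  interpret star_gadget f "m + 2" a b
    using a b \<open>1 \<le> m\<close> by unfold_locales auto
  have "real (b - 1) * plateau \<le> K * real (m + 2 + 1 + (b - 1) * a) ^ 2"
    using card_support_le card_nat_vertices cyc_sum_ge
    by (intro quadratic_bound_if_cyc_sum_ge[OF simple_graph connected]) auto
  then have bound: "real (b - 1) * plateau * (3 * f b a) \<le> K * (2 * real m + 3) ^ 2 * (3 * f b a)"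
    using f_pos by (intro mult_right_mono) (auto simp: m_def algebra_simps)
  have plateau: "3 * (f b a * plateau) = f 2 2 * (2 * real m + 1)"
    using plateau_eq by (simp add: algebra_simps)
  have "real (b - 1) * f 2 2 * (2 * real m + 1) = real (b - 1) * (3 * (f b a * plateau))"
    by (simp only: plateau ac_simps)
  also have "\<dots> = real (b - 1) * plateau * (3 * f b a)" by (simp only: ac_simps)
  also have "\<dots> \<le> K * (2 * real m + 3) ^ 2 * (3 * f b a)" by (rule bound)
  also have "\<dots> = 3 * K * f b a * (2 * real m + 3) ^ 2" by (simp only: ac_simps)
  finally show ?thesis unfolding m_def .
qed

lemma rule_degree_one_le:
  assumes "2 \<le> M"
  shows "f 1 M \<le> 18 * K * f 2 2"
proof -
  define b where "b = M - 1"
  have b: "1 \<le> b" "Suc b = M" using assms by (auto simp: b_def)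
  have "real b * f 1 (Suc b) * (1 + real b) \<le> 4 * K * f 2 2 * (real b + 2) ^ 2"
    using biclique_bound[OF _ b(1), of 1] by (simp add: ac_simps)
  then have "f 1 (Suc b) \<le> 9/2 * (4 * K * f 2 2)"
    using b K pos[of 2 2] by (intro biclique_arith_degree_one) auto
  then show ?thesis using b by simp
qed

lemma min_times_rule_le:
  assumes "2 \<le> m" "m \<le> M"
  shows "real m * f m M \<le> 32 * K * f 2 2"
proof -
  have "real M * (real (m - 1) * f m M) * real (m + M)
      \<le> real M * (f m (Suc M) + real (m - 1) * f m M) * real (m + M)"
    using pos assms by (intro mult_right_mono mult_left_mono) (auto simp: less_imp_le)
  also have "\<dots> \<le> 4 * K * f 2 2 * real (m + M + 1) ^ 2"
    using assms by (intro biclique_bound) auto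
  finally have "real M * ((real m - 1) * f m M) * (real m + real M) \<le> 4 * K * f 2 2 * (real m + real M + 1) ^ 2"
    using assms by (simp add: of_nat_diff add_ac)
  then have "real m * f m M \<le> 8 * (4 * K * f 2 2)"
    using assms pos K by (intro biclique_arith) (auto simp: less_imp_le)
  then show ?thesis by simp
qed

lemma min_times_rule_ge:
  assumes "1 \<le> m" "2 \<le> M"
  shows "2 * f 2 2 \<le> 75 * K * real m * f M m"
proof (rule star_arith)
  show "real (M - 1) * f 2 2 * (2 * (real (M - 1) * real m) + 1)
      \<le> 3 * K * f M m * (2 * (real (M - 1) * real m) + 3) ^ 2"
    using star_bound[OF assms] by simp
qed (use assms pos K in \<open>auto simp: less_imp_le\<close>)

lemma min_degree_times_rule_bounds:
  assumes "1 \<le> p" "1 \<le> q" "\<not> (p = 1 \<and> q = 1)"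
  shows "2 * f 2 2 / (75 * K) \<le> f p q * real (min p q)" "f p q * real (min p q) \<le> 32 * K * f 2 2"
proof -
  define m M where "m = min p q" and "M = max p q"
  have f_eq: "f p q = f m M" "f p q = f M m"
    using symm by (auto simp: m_def M_def min_def max_def)
  have mM: "1 \<le> m" "m \<le> M" "2 \<le> M" using assms by (auto simp: m_def M_def)
  have "2 * f 2 2 \<le> 75 * K * real m * f M m" using min_times_rule_ge mM by blast
  then show "2 * f 2 2 / (75 * K) \<le> f p q * real (min p q)"
    using K f_eq by (simp add: m_def[symmetric] divide_le_eq ac_simps)
  show "f p q * real (min p q) \<le> 32 * K * f 2 2"
  proof (cases "m = 1")
    case True
    have "18 * (K * f 2 2) \<le> 32 * K * f 2 2" using K pos[of 2 2] by simp
    then show ?thesis using rule_degree_one_le[OF mM(3)] True f_eq by (simp add: m_def[symmetric])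
  next
    case False
    then show ?thesis using min_times_rule_le[of m M] mM f_eq by (simp add: m_def[symmetric] ac_simps)
  qed
qed

lemma roughly_equivalent:
  "roughly_equivalent min_deg_rule (local_cond f)"
proof (rule roughly_equivalent_min_deg_rule_if_bounds)
  let ?\<alpha> = "min (2 * f 2 2 / (75 * K)) (f 1 1)" and ?\<beta> = "max (32 * K * f 2 2) (f 1 1)"
  show "0 < ?\<alpha>" using pos K by simp
  show "?\<alpha> \<le> ?\<beta>" by simp
  fix p q :: nat assume pq: "1 \<le> p" "1 \<le> q"
  show "?\<alpha> \<le> f p q * real (min p q) \<and> f p q * real (min p q) \<le> ?\<beta>"
  proof (cases "p = 1 \<and> q = 1")
    case False
    then show ?thesis
      using min_degree_times_rule_bounds[OF pq False] by (simp add: min_le_iff_disj le_max_iff_disj)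
  qed simp
qed

end

theorem proposition2:
  fixes f :: "nat \<Rightarrow> nat \<Rightarrow> real"
  assumes pos: "\<forall>a b. 1 \<le> a \<longrightarrow> 1 \<le> b \<longrightarrow> 0 < f a b"
    and symm: "\<forall>a b. f a b = f b a"
  shows "roughly_equivalent min_deg_rule (local_cond f) \<or>
         (\<forall>K::real. K > 0 \<longrightarrow> (\<exists>V E. simple_graph V E \<and> graph_connected V E \<and>
            cyclic_cover_time V E (local_cond f V E) > K * real (card V) ^ 2))"
proof (rule disjCI)
  assume "\<not> (\<forall>K::real. K > 0 \<longrightarrow> (\<exists>V E. simple_graph V E \<and> graph_connected V E \<and>
            cyclic_cover_time V E (local_cond f V E) > K * real (card V) ^ 2))"
  then obtain K :: real where "0 < K" and "\<And>V E. simple_graph V E \<Longrightarrow> graph_connected V E \<Longrightarrow>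
      cyclic_cover_time V E (local_cond f V E) \<le> K * real (card V) ^ 2"
    by (auto simp: not_less)
  then interpret quadratic_cover_time f K
    using pos symm by unfold_locales auto
  show "roughly_equivalent min_deg_rule (local_cond f)" by (rule roughly_equivalent)
qed

end
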